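(* Let $\mathcal G$ be a pseudogroup on a compact metric space $X$ with finite symmetric generating set $\mathcal G_1$, and let $\mu$ be a Borel probability measure on $X$ which is $\mathcal G$-invariant, ergodic and $(\mathcal G,\mathcal G_1)$-homogeneous, and such that $\overline{h}_\mu((\mathcal G,\mathcal G_1),x)>0$ for every $x\in X$. Then $\mu$ is $(\mathcal G,\mathcal G_1)$-weakly expansive, i.e. there exists $\delta>0$ such that $\mu(\Phi_\delta(x))=0$ for $\mu$-a.e. $x\in X$.
   Context: $(X,d)$ is a compact metric space. $\mathrm{Homeo}(X)$ is the set of homeomorphisms $g:D_g\to R_g$ between open subsets of $X$; compositions are taken on their natural domains, $D_{h\circ g}=g^{-1}(D_h)$, and $g(A)$ means $g(A\cap D_g)$. A pseudogroup is a set $\mathcal G\subset\mathrm{Homeo}(X)$ containing $\mathrm{id}_X$, closed under composition, inversion and restriction to open subsets of the domain, and such that if $g\in\mathrm{Homeo}(X)$ and $D_g$ has an open cover $\mathcal U$ with $g|_U\in\mathcal G$ for all $U$, then $g\in\mathcal G$. $\mathcal G_1$ generates $\mathcal G$ means: $\bigcup_{g\in\mathcal G_1}(D_g\cup R_g)=X$ and $\mathcal G$ is exactly the set of $g\in\mathrm{Homeo}(X)$ that near each point of $D_g$ coincide with a finite composition of elements of $\mathcal G_1$ and their inverses; symmetric means $\mathrm{id}_X\in\mathcal G_1$ and $\mathcal G_1$ is closed under inverses. Let $\mathcal G_n=\{g_1\circ\cdots\circ g_n:g_i\in\mathcal G_1\}$, $\mathcal G_n^x=\{g\in\mathcal G_n:x\in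 D_g\}$, $B_n(x,\varepsilon)=\{y: d(g(x),g(y))<\varepsilon\ \forall g\in\mathcal G_n^x\cap\mathcal G_n^y\}$, and $\Phi_\delta(x)=\{y: d(g(x),g(y))\le\delta\ \forall n\in\mathbb N,\ \forall g\in\mathcal G_n^x\cap\mathcal G_n^y\}$. $\mu$ is $\mathcal G$-invariant if $\mu(g(A))=\mu(A)$ for all $g\in\mathcal G$ and Borel $A\subset D_g$; a Borel set $A$ is invariant if $g(A\cap D_g)\subset A$ for all $g\in\mathcal G$; an invariant $\mu$ is ergodic if every invariant Borel set has measure $0$ or $1$. $\mu$ is $(\mathcal G,\mathcal G_1)$-homogeneous if $\mu(K)<\infty$ for every compact $K$, there is a compact $K_0$ with $\mu(K_0)>0$, and for every $\varepsilon>0$ there exist $\delta>0$, $c>0$ with $\mu(B_n(y,\delta))\le c\,\mu(B_n(x,\varepsilon))$ for all $n\in\mathbb N$, $x,y\in X$. The local upper measure entropy is $\overline{h}_\mu((\mathcal G,\mathcal G_1),x)=\lim_{\varepsilon\to0}\limsup_{n\to\infty}-\frac1n\log\mu(B_n(x,\varepsilon))$. *)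

theory Defs
  imports "HOL-Probability.Probability"
begin

definition phomeo :: "('a::topological_space \<Rightarrow> 'a option) set" where
  "phomeo = {g. open (dom g) \<and> open (ran g) \<and>
     (\<exists>h. homeomorphism (dom g) (ran g) (\<lambda>x. the (g x)) h)}"

definition pinv :: "('a \<Rightarrow> 'a option) \<Rightarrow> ('a \<Rightarrow> 'a option)" where
  "pinv g = (\<lambda>y. if y \<in> ran g then Some (the_inv_into (dom g) (\<lambda>x. the (g x)) y) else None)"

definition pseudogroup :: "('a::topological_space \<Rightarrow> 'a option) set \<Rightarrow> bool" where
  "pseudogroup G \<longleftrightarrow> G \<subseteq> phomeo \<and> Some \<in> G
     \<and> (\<forall>f\<in>G. \<forall>g\<in>G. f \<circ>\<^sub>m g \<in> G)
     \<and> (\<forall>f\<in>G. pinv f \<in> G)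
     \<and> (\<forall>f\<in>G. \<forall>U. open U \<and> U \<subseteq> dom f \<longrightarrow> f |` U \<in> G)
     \<and> (\<forall>g\<in>phomeo. (\<exists>\<U>. (\<forall>U\<in>\<U>. open U) \<and> \<Union>\<U> = dom g \<and> (\<forall>U\<in>\<U>. g |` U \<in> G))
            \<longrightarrow> g \<in> G)"

definition comp_list :: "('a \<Rightarrow> 'a option) list \<Rightarrow> ('a \<Rightarrow> 'a option)" where
  "comp_list gs = foldr (\<lambda>g h. g \<circ>\<^sub>m h) gs Some"

definition generates ::
  "('a::topological_space \<Rightarrow> 'a option) set \<Rightarrow> ('a \<Rightarrow> 'a option) set \<Rightarrow> bool" where
  "generates G1 G \<longleftrightarrow> G1 \<subseteq> phomeo \<and> (\<Union>g\<in>G1. dom g \<union> ran g) = UNIV \<and>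
     G = {g \<in> phomeo. \<forall>x\<in>dom g. \<exists>gs. set gs \<subseteq> G1 \<union> pinv ` G1 \<and>
            (\<exists>U. open U \<and> x \<in> U \<and> U \<subseteq> dom g \<and> U \<subseteq> dom (comp_list gs) \<and>
                 (\<forall>y\<in>U. g y = comp_list gs y))}"

definition symmetric_gen :: "('a \<Rightarrow> 'a option) set \<Rightarrow> bool" where
  "symmetric_gen G1 \<longleftrightarrow> Some \<in> G1 \<and> (\<forall>g\<in>G1. pinv g \<in> G1)"

definition Gn :: "('a \<Rightarrow> 'a option) set \<Rightarrow> nat \<Rightarrow> ('a \<Rightarrow> 'a option) set" where
  "Gn G1 n = {comp_list gs | gs. length gs = n \<and> set gs \<subseteq> G1}"

definition Bowen_ball :: "('a::metric_space \<Rightarrow> 'a option) set \<Rightarrow> nat \<Rightarrow> 'a \<Rightarrow> real \<Rightarrow> 'a set" where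
  "Bowen_ball G1 n x \<epsilon> = {y. \<forall>g\<in>Gn G1 n. x \<in> dom g \<and> y \<in> dom g \<longrightarrow>
                                   dist (the (g x)) (the (g y)) < \<epsilon>}"

definition Phi :: "('a::metric_space \<Rightarrow> 'a option) set \<Rightarrow> real \<Rightarrow> 'a \<Rightarrow> 'a set" where
  "Phi G1 \<delta> x = {y. \<forall>n\<ge>1. \<forall>g\<in>Gn G1 n. x \<in> dom g \<and> y \<in> dom g \<longrightarrow>
                                   dist (the (g x)) (the (g y)) \<le> \<delta>}"

definition G_invariant_measure :: "('a::topological_space \<Rightarrow> 'a option) set \<Rightarrow> 'a measure \<Rightarrow> bool" where
  "G_invariant_measure G \<mu> \<longleftrightarrow> (\<forall>g\<in>G. \<forall>A\<in>sets borel. A \<subseteq> dom g \<longrightarrow>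
      emeasure \<mu> ((\<lambda>x. the (g x)) ` A) = emeasure \<mu> A)"

definition G_invariant_set :: "('a::topological_space \<Rightarrow> 'a option) set \<Rightarrow> 'a set \<Rightarrow> bool" where
  "G_invariant_set G A \<longleftrightarrow> A \<in> sets borel \<and>
      (\<forall>g\<in>G. (\<lambda>x. the (g x)) ` (A \<inter> dom g) \<subseteq> A)"

definition G_ergodic :: "('a::topological_space \<Rightarrow> 'a option) set \<Rightarrow> 'a measure \<Rightarrow> bool" where
  "G_ergodic G \<mu> \<longleftrightarrow> G_invariant_measure G \<mu> \<and>
      (\<forall>A. G_invariant_set G A \<longrightarrow> emeasure \<mu> A = 0 \<or> emeasure \<mu> A = 1)"

definition homogeneous :: "('a::metric_space \<Rightarrow> 'a option) set \<Rightarrow> 'a measure \<Rightarrow> bool" where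
  "homogeneous G1 \<mu> \<longleftrightarrow> (\<forall>K. compact K \<longrightarrow> emeasure \<mu> K < \<infinity>) \<and>
     (\<exists>K0. compact K0 \<and> emeasure \<mu> K0 > 0) \<and>
     (\<forall>\<epsilon>>0. \<exists>\<delta>>0. \<exists>c>0. \<forall>n\<ge>1. \<forall>x y.
         emeasure \<mu> (Bowen_ball G1 n y \<delta>) \<le> ennreal c * emeasure \<mu> (Bowen_ball G1 n x \<epsilon>))"

definition neg_log :: "ennreal \<Rightarrow> ereal" where
  "neg_log m = (if m = 0 then \<infinity> else ereal (- ln (enn2real m)))"

definition local_upper_entropy :: "('a::metric_space \<Rightarrow> 'a option) set \<Rightarrow> 'a measure \<Rightarrow> 'a \<Rightarrow> ereal" where
  "local_upper_entropy G1 \<mu> x =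
     Lim (at_right 0) (\<lambda>\<epsilon>::real. limsup (\<lambda>n. ereal (1 / real n) * neg_log (emeasure \<mu> (Bowen_ball G1 n x \<epsilon>))))"

end

theory Submission
  imports Defs
begin

text \<open>Homogeneity compares Bowen balls uniformly in their centres: if the entropy at some
  point \<open>x\<^sub>0\<close> is positive at scale \<open>\<epsilon>\<close>, and \<open>\<delta>, c\<close> are the constants homogeneity gives for \<open>\<epsilon>\<close>,
  then \<open>\<mu>(B\<^sub>n(y,\<delta>)) \<le> c \<mu>(B\<^sub>n(x\<^sub>0,\<epsilon>))\<close> for all \<open>y\<close> and \<open>n\<close>. As \<open>\<Phi>(y)\<close> with parameter \<open>\<delta>/2\<close> lies
  in every \<open>B\<^sub>n(y,\<delta>)\<close>, if it had positive measure then \<open>\<mu>(B\<^sub>n(x\<^sub>0,\<epsilon>))\<close> would stay bounded away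
  from 0 and the exponential decay rate at \<open>x\<^sub>0\<close> and scale \<open>\<epsilon>\<close> would vanish. So this set is null
  for every \<open>y\<close>.\<close>

definition Bowen_decay_rate :: "('a::metric_space \<Rightarrow> 'a option) set \<Rightarrow> 'a measure \<Rightarrow> 'a \<Rightarrow> real \<Rightarrow> ereal" where
  "Bowen_decay_rate G1 \<mu> x \<epsilon> =
     limsup (\<lambda>n. ereal (1 / real n) * neg_log (emeasure \<mu> (Bowen_ball G1 n x \<epsilon>)))"

lemma local_upper_entropy_eq_Lim:
  "local_upper_entropy G1 \<mu> x = Lim (at_right 0) (Bowen_decay_rate G1 \<mu> x)"
  by (simp add: local_upper_entropy_def Bowen_decay_rate_def[abs_def])

lemma open_dom_comp_list_and_continuous:
  assumes "set gs \<subseteq> phomeo"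
  shows "open (dom (comp_list gs)) \<and> continuous_on (dom (comp_list gs)) (\<lambda>x. the (comp_list gs x))"
  using assms
proof (induction gs)
  case Nil
  then show ?case by (simp add: comp_list_def continuous_on_id)
next
  case (Cons f gs)
  define h where "h = comp_list gs"
  have open_h: "open (dom h)" and cont_h: "continuous_on (dom h) (\<lambda>x. the (h x))"
    using Cons h_def by auto
  have open_f: "open (dom f)" and cont_f: "continuous_on (dom f) (\<lambda>x. the (f x))"
    using Cons.prems unfolding phomeo_def homeomorphism_def by auto
  have dom_comp: "dom (f \<circ>\<^sub>m h) = dom h \<inter> (\<lambda>x. the (h x)) -` dom f"
    by (auto simp: map_comp_def dom_def split: option.splits)
  have "open (dom (f \<circ>\<^sub>m h))"
    unfolding dom_comp using continuous_open_preimage[OF cont_h open_h open_f] .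
  moreover have "continuous_on (dom (f \<circ>\<^sub>m h)) (\<lambda>x. the (f (the (h x))))"
    by (rule continuous_on_compose2[OF cont_f continuous_on_subset[OF cont_h]])
       (auto simp: dom_comp)
  then have "continuous_on (dom (f \<circ>\<^sub>m h)) (\<lambda>x. the ((f \<circ>\<^sub>m h) x))"
    by (rule continuous_on_cong[THEN iffD1, OF refl, rotated])
       (auto simp: map_comp_def dom_def split: option.splits)
  moreover have "comp_list (f # gs) = f \<circ>\<^sub>m h"
    by (simp add: comp_list_def h_def)
  ultimately show ?case by simp
qed

lemma finite_Gn: "finite G1 \<Longrightarrow> finite (Gn G1 n)"
proof -
  assume "finite G1"
  have "Gn G1 n = comp_list ` {gs. set gs \<subseteq> G1 \<and> length gs = n}"
    unfolding Gn_def by auto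
  then show ?thesis using finite_lists_length_eq[OF \<open>finite G1\<close>] by simp
qed

lemma Bowen_ball_in_borel:
  assumes "G1 \<subseteq> phomeo" "finite G1"
  shows "Bowen_ball G1 n x \<epsilon> \<in> sets borel"
proof -
  have "{y \<in> space borel. x \<in> dom g \<and> y \<in> dom g \<longrightarrow> dist (the (g x)) (the (g y)) < \<epsilon>} \<in> sets borel"
    if "g \<in> Gn G1 n" for g
  proof (cases "x \<in> dom g")
    case True
    obtain gs where "g = comp_list gs" "set gs \<subseteq> G1"
      using \<open>g \<in> Gn G1 n\<close> unfolding Gn_def by blast
    then have open_g: "open (dom g)" and cont_g: "continuous_on (dom g) (\<lambda>y. the (g y))"
      using open_dom_comp_list_and_continuous assms(1) by blast+
    have "{y \<in> space borel. x \<in> dom g \<and> y \<in> dom g \<longrightarrow> dist (the (g x)) (the (g y)) < \<epsilon>}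
        = - dom g \<union> (dom g \<inter> (\<lambda>y. the (g y)) -` ball (the (g x)) \<epsilon>)"
      using True by (auto simp: dist_commute)
    moreover have "open (dom g \<inter> (\<lambda>y. the (g y)) -` ball (the (g x)) \<epsilon>)"
      using continuous_open_preimage[OF cont_g open_g open_ball] .
    ultimately show ?thesis
      using open_g by (auto intro: borel_closed)
  qed simp
  then have "{y \<in> space borel. \<forall>g\<in>Gn G1 n. x \<in> dom g \<and> y \<in> dom g \<longrightarrow> dist (the (g x)) (the (g y)) < \<epsilon>}
      \<in> sets borel"
    by (rule sets.sets_Collect_finite_All[OF _ finite_Gn[OF assms(2)]])
  then show ?thesis unfolding Bowen_ball_def by simp
qed

lemma Phi_subset_Bowen_ball:
  assumes "\<delta> < \<epsilon>" "n \<ge> 1"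
  shows "Phi G1 \<delta> x \<subseteq> Bowen_ball G1 n x \<epsilon>"
  using assms unfolding Phi_def Bowen_ball_def by force

lemma neg_log_emeasure_nonneg:
  assumes "prob_space M"
  shows "0 \<le> neg_log (emeasure M A)"
proof -
  interpret prob_space M by fact
  have "emeasure M A \<noteq> 0 \<Longrightarrow> 0 < measure M A"
    by (simp add: emeasure_eq_measure zero_less_measure_iff)
  then show ?thesis
    using measure_le_1[of A] unfolding neg_log_def by (auto simp: emeasure_eq_measure)
qed

lemma neg_log_emeasure_eq:
  assumes "measure M A > 0"
  shows "neg_log (emeasure M A) = ereal (- ln (measure M A))"
  using assms unfolding neg_log_def measure_def by auto

lemma Bowen_decay_rate_nonneg:
  assumes "prob_space \<mu>"
  shows "0 \<le> Bowen_decay_rate G1 \<mu> x \<epsilon>"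
  unfolding Bowen_decay_rate_def
  by (rule le_Limsup) (simp_all add: neg_log_emeasure_nonneg[OF assms])

lemma limsup_neg_log_le_0_if_bounded_below:
  assumes "b > 0" and "\<And>n. n \<ge> 1 \<Longrightarrow> b \<le> measure M (A n)"
  shows "limsup (\<lambda>n. ereal (1 / real n) * neg_log (emeasure M (A n))) \<le> 0"
proof -
  define K where "K = max 0 (- ln b)"
  have "ereal (1 / real n) * neg_log (emeasure M (A n)) \<le> ereal (K / real n)" if "n \<ge> 1" for n
  proof -
    have pos: "measure M (A n) > 0" using assms that by force
    have "ln b \<le> ln (measure M (A n))"
      using assms(2)[OF that] \<open>b > 0\<close> by simp
    then have ln_le: "- ln (measure M (A n)) \<le> K"
      unfolding K_def by linarith
    have "- ln (measure M (A n)) / real n \<le> K / real n"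
      using divide_right_mono[OF ln_le, of "real n"] by simp
    then show ?thesis by (simp add: neg_log_emeasure_eq[OF pos])
  qed
  then have "limsup (\<lambda>n. ereal (1 / real n) * neg_log (emeasure M (A n)))
      \<le> limsup (\<lambda>n. ereal (K / real n))"
    by (intro Limsup_mono) (auto simp: eventually_sequentially)
  also have "\<dots> = 0"
  proof -
    have "(\<lambda>n. ereal (K / real n)) \<longlonglongrightarrow> ereal 0"
      by (intro tendsto_intros lim_const_over_n)
    then show ?thesis by (simp add: lim_imp_Limsup zero_ereal_def)
  qed
  finally show ?thesis .
qed

text \<open>The nonnegativity hypothesis matters: \<open>Lim\<close> is a definite description, so without it
  \<open>f \<le> 0\<close> on \<open>(0,\<infinity>)\<close> would say nothing about \<open>Lim (at_right 0) f\<close>.\<close>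

lemma Lim_at_right_0_pos_imp_pos:
  fixes f :: "real \<Rightarrow> 'b::{linorder_topology, zero}"
  assumes "\<And>\<epsilon>. \<epsilon> > 0 \<Longrightarrow> 0 \<le> f \<epsilon>" and "Lim (at_right 0) f > 0"
  shows "\<exists>\<epsilon>>0. f \<epsilon> > 0"
proof (rule ccontr)
  assume "\<not> (\<exists>\<epsilon>>0. f \<epsilon> > 0)"
  with assms(1) have "f \<epsilon> = 0" if "\<epsilon> > 0" for \<epsilon>
    using that by (meson order.antisym not_le)
  then have "\<forall>\<^sub>F \<epsilon> in at_right 0. f \<epsilon> = 0"
    using eventually_at_right_less[of "0::real"] by (auto elim: eventually_mono)
  then have "(f \<longlongrightarrow> 0) (at_right 0)"
    by (rule tendsto_eventually)
  then have "Lim (at_right 0) f = 0"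
    by (intro tendsto_Lim) auto
  with assms(2) show False by simp
qed

lemma emeasure_Phi_eq_0:
  assumes "finite_measure \<mu>" "sets \<mu> = sets borel" "G1 \<subseteq> phomeo" "finite G1"
    and "\<delta> < \<epsilon>" "c > 0"
    and comparable: "\<And>n. n \<ge> 1 \<Longrightarrow>
      emeasure \<mu> (Bowen_ball G1 n y \<epsilon>) \<le> ennreal c * emeasure \<mu> (Bowen_ball G1 n x \<epsilon>')"
    and "Bowen_decay_rate G1 \<mu> x \<epsilon>' > 0"
  shows "emeasure \<mu> (Phi G1 \<delta> y) = 0"
proof (rule ccontr)
  interpret finite_measure \<mu> by fact
  assume "emeasure \<mu> (Phi G1 \<delta> y) \<noteq> 0"
  then have m_pos: "measure \<mu> (Phi G1 \<delta> y) > 0"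
    by (simp add: emeasure_eq_measure zero_less_measure_iff)
  have lower_bound: "measure \<mu> (Phi G1 \<delta> y) / c \<le> measure \<mu> (Bowen_ball G1 n x \<epsilon>')"
    if "n \<ge> 1" for n
  proof -
    have "measure \<mu> (Phi G1 \<delta> y) \<le> measure \<mu> (Bowen_ball G1 n y \<epsilon>)"
      using Phi_subset_Bowen_ball[OF \<open>\<delta> < \<epsilon>\<close> that] Bowen_ball_in_borel[OF assms(3,4)] assms(2)
      by (intro finite_measure_mono) auto
    also have "\<dots> \<le> c * measure \<mu> (Bowen_ball G1 n x \<epsilon>')"
      using comparable[OF that] \<open>c > 0\<close>
      by (simp add: emeasure_eq_measure ennreal_mult[symmetric] ennreal_le_iff)
    finally show ?thesis using \<open>c > 0\<close> by (simp add: field_simps)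
  qed
  have "Bowen_decay_rate G1 \<mu> x \<epsilon>' \<le> 0"
    unfolding Bowen_decay_rate_def
    by (rule limsup_neg_log_le_0_if_bounded_below[OF _ lower_bound]) (use m_pos \<open>c > 0\<close> in auto)
  with assms(8) show False by simp
qed

theorem theoremB:
  fixes G G1 :: "('a::metric_space \<Rightarrow> 'a option) set"
    and \<mu> :: "'a measure"
  assumes "compact (UNIV :: 'a set)"
    and "pseudogroup G"
    and "generates G1 G" and "finite G1" and "symmetric_gen G1"
    and "prob_space \<mu>" and "sets \<mu> = sets borel"
    and "G_ergodic G \<mu>"
    and "homogeneous G1 \<mu>"
    and "\<forall>x. local_upper_entropy G1 \<mu> x > 0"
  shows "\<exists>\<delta>>0. AE x in \<mu>. emeasure \<mu> (Phi G1 \<delta> x) = 0"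
proof -
  obtain x0 :: 'a where True by simp
  have "local_upper_entropy G1 \<mu> x0 > 0"
    using assms(10) by blast
  then have "\<exists>\<epsilon>>0. Bowen_decay_rate G1 \<mu> x0 \<epsilon> > 0"
    unfolding local_upper_entropy_eq_Lim
    by (intro Lim_at_right_0_pos_imp_pos Bowen_decay_rate_nonneg[OF \<open>prob_space \<mu>\<close>])
  then obtain \<epsilon> where "\<epsilon> > 0" and rate_pos: "Bowen_decay_rate G1 \<mu> x0 \<epsilon> > 0"
    by blast
  then have "\<exists>\<delta>>0. \<exists>c>0. \<forall>n\<ge>1. \<forall>x y.
      emeasure \<mu> (Bowen_ball G1 n y \<delta>) \<le> ennreal c * emeasure \<mu> (Bowen_ball G1 n x \<epsilon>)"
    using \<open>homogeneous G1 \<mu>\<close> unfolding homogeneous_def by blast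
  then obtain \<delta> c where "\<delta> > 0" "c > 0" and comparable: "\<And>n x y. n \<ge> 1 \<Longrightarrow>
      emeasure \<mu> (Bowen_ball G1 n y \<delta>) \<le> ennreal c * emeasure \<mu> (Bowen_ball G1 n x \<epsilon>)"
    by blast
  have "G1 \<subseteq> phomeo"
    using \<open>generates G1 G\<close> unfolding generates_def by simp
  moreover have "finite_measure \<mu>"
    using \<open>prob_space \<mu>\<close> by (simp add: prob_space_def)
  moreover have "\<delta> / 2 < \<delta>"
    using \<open>\<delta> > 0\<close> by simp
  ultimately have "emeasure \<mu> (Phi G1 (\<delta>/2) y) = 0" for y
    using emeasure_Phi_eq_0[OF _ \<open>sets \<mu> = sets borel\<close> _ \<open>finite G1\<close> _ \<open>c > 0\<close> comparable rate_pos]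
    by blast
  then show ?thesis
    using \<open>\<delta> > 0\<close> by (intro exI[of _ "\<delta>/2"]) simp
qed

end
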